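(* Let $M\geq 1$ and $P=4M-3$. Let $E$ be a $P\times P$ diagonal operator on $\ell(\mathbb{Z}_P)$ with diagonal entries $\{\omega_k\}_{k=0}^{4M-4}$ satisfying $|\omega_k|=1$ for all $k$ and $\omega_j\overline{\omega_k}\notin\mathbb{R}$ for all $j\neq k$. For $x\in\ell(\mathbb{Z}_P)$ with $x[p]=0$ for all $p=M,\ldots,4M-4$ (i.e. an $M$-dimensional complex signal embedded by zero-padding), the signal $x$ is determined up to a global phase factor by the pair $\operatorname{CirAut}(x+Rx)$ and $\operatorname{CirAut}(Ex+REx)$: if $x,y$ are two such signals with $\operatorname{CirAut}(x+Rx)=\operatorname{CirAut}(y+Ry)$ and $\operatorname{CirAut}(Ex+REx)=\operatorname{CirAut}(Ey+REy)$, then $y=\omega x$ for some $\omega\in\mathbb{C}$ with $|\omega|=1$.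
   Context: $\ell(\mathbb{Z}_P)$ denotes the space of $P$-periodic functions $u\colon\mathbb{Z}\to\mathbb{C}$ (i.e. $u[p+P]=u[p]$), with inner product $\langle u,v\rangle=\sum_{p\in\mathbb{Z}_P}u[p]\overline{v[p]}$. The translation operator is $(T^pu)[p']:=u[p'-p]$ and the reversal operator is $(Ru)[p]:=u[-p]$. The circular autocorrelation of $u$ is $\operatorname{CirAut}(u)\in\ell(\mathbb{Z}_P)$ with $\operatorname{CirAut}(u)[p]:=\langle u,T^pu\rangle=\sum_{p'\in\mathbb{Z}_P}u[p']\overline{u[p'-p]}$. The operator $E$ acts by $(Ex)[k]=\omega_kx[k]$ for $k=0,\ldots,P-1$. *)

theory Defs
  imports "HOL-Analysis.Analysis"
begin

text \<open>Elements of l(Z_P) are represented as P-periodic functions int => complex.\<close>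

definition periodic :: "nat \<Rightarrow> (int \<Rightarrow> complex) \<Rightarrow> bool" where
  "periodic P u \<longleftrightarrow> (\<forall>p. u (p + int P) = u p)"

definition inner_ZP :: "nat \<Rightarrow> (int \<Rightarrow> complex) \<Rightarrow> (int \<Rightarrow> complex) \<Rightarrow> complex" where
  "inner_ZP P u v = (\<Sum>p\<in>{0..<int P}. u p * cnj (v p))"

definition transl :: "int \<Rightarrow> (int \<Rightarrow> complex) \<Rightarrow> (int \<Rightarrow> complex)" where
  "transl p u = (\<lambda>p'. u (p' - p))"

definition revop :: "(int \<Rightarrow> complex) \<Rightarrow> (int \<Rightarrow> complex)" where
  "revop u = (\<lambda>p. u (- p))"

definition CirAut :: "nat \<Rightarrow> (int \<Rightarrow> complex) \<Rightarrow> (int \<Rightarrow> complex)" where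
  "CirAut P u = (\<lambda>p. inner_ZP P u (transl p u))"

definition diagop :: "nat \<Rightarrow> (nat \<Rightarrow> complex) \<Rightarrow> (int \<Rightarrow> complex) \<Rightarrow> (int \<Rightarrow> complex)" where
  "diagop P \<omega> x = (\<lambda>k. \<omega> (nat (k mod int P)) * x k)"

end

theory Submission
  imports Defs
begin

text \<open>Write \<open>a = (x[0], \<dots>, x[M-1])\<close>. Because \<open>P = 4M - 3\<close>, for lags \<open>0 \<le> p \<le> 2M - 2\<close>
  the circular autocorrelation of \<open>x + Rx\<close> involves no wrap-around and is a fixed
  linear expression in the products \<open>a(i) a(j)\<^sup>*\<close>. If \<open>m\<close> is the last index with
  \<open>a(m) \<noteq> 0\<close>, then \<open>2m\<close> is the largest lag with a nonzero value, which is a multiple of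
  \<open>|a(m)|\<^sup>2\<close>. Descending, the lag \<open>2m - k\<close> determines \<open>Re (a(m) a(m-k)\<^sup>*)\<close> once
  \<open>a(m-k+1), \<dots>, a(m)\<close> are known up to the common phase; the same lag for \<open>Ex\<close> determines
  \<open>Re (\<omega>(m) \<omega>(m-k)\<^sup>* a(m) a(m-k)\<^sup>*)\<close>. As \<open>\<omega>(m) \<omega>(m-k)\<^sup>*\<close> is not real, the two real
  parts fix \<open>a(m) a(m-k)\<^sup>*\<close> and hence \<open>a(m-k)\<close>.\<close>

definition lin_aut :: "nat \<Rightarrow> (nat \<Rightarrow> complex) \<Rightarrow> nat \<Rightarrow> complex" where
  "lin_aut N u p = (\<Sum>i<N. u i * cnj (u (i + p)))"

definition rev_conv :: "(nat \<Rightarrow> complex) \<Rightarrow> nat \<Rightarrow> complex" where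
  "rev_conv u p = (\<Sum>i\<le>p. u i * cnj (u (p - i)))"

definition sym_aut :: "nat \<Rightarrow> (nat \<Rightarrow> complex) \<Rightarrow> nat \<Rightarrow> complex" where
  "sym_aut N u p = lin_aut N u p + cnj (lin_aut N u p) + rev_conv u p
     + (if p = 0 then u 0 * cnj (u 0) else 0)"

lemma sym_aut_vanishes_above:
  assumes "\<forall>i>m. u i = 0" and "2 * m < p"
  shows "sym_aut N u p = 0"
proof -
  have "lin_aut N u p = 0"
    unfolding lin_aut_def by (rule sum.neutral) (use assms in auto)
  moreover have "rev_conv u p = 0"
    unfolding rev_conv_def
  proof (rule sum.neutral, intro ballI)
    fix i assume "i \<in> {..p}"
    then have "m < i \<or> m < p - i" using assms(2) by auto
    then show "u i * cnj (u (p - i)) = 0" using assms(1) by auto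
  qed
  ultimately show ?thesis unfolding sym_aut_def using assms(2) by simp
qed

lemma sym_aut_top:
  assumes "\<forall>i>m. u i = 0" and "m < N"
  shows "sym_aut N u (2 * m) = (if m = 0 then 4 else 1) * (u m * cnj (u m))"
proof -
  have "lin_aut N u (2 * m) = (\<Sum>i<N. if i = 0 \<and> m = 0 then u m * cnj (u m) else 0)"
    unfolding lin_aut_def by (rule sum.cong) (use assms(1) in auto)
  also have "\<dots> = (if m = 0 then u m * cnj (u m) else 0)" using assms(2) by simp
  finally have lin: "lin_aut N u (2 * m) = (if m = 0 then u m * cnj (u m) else 0)" .
  have "rev_conv u (2 * m) = (\<Sum>i\<le>2 * m. if i = m then u m * cnj (u m) else 0)"
    unfolding rev_conv_def
  proof (rule sum.cong[OF refl])
    fix i assume "i \<in> {..2 * m}"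
    then have "i = m \<or> m < i \<or> m < 2 * m - i" by auto
    then show "u i * cnj (u (2 * m - i)) = (if i = m then u m * cnj (u m) else 0)"
      using assms(1) by (auto simp: mult_2)
  qed
  also have "\<dots> = u m * cnj (u m)" by simp
  finally have conv: "rev_conv u (2 * m) = u m * cnj (u m)" .
  have "cnj (u m * cnj (u m)) = u m * cnj (u m)" by (simp add: mult.commute)
  then show ?thesis unfolding sym_aut_def lin conv by auto
qed

lemma sym_aut_top_nonzero:
  assumes "\<forall>i>m. u i = 0" and "u m \<noteq> 0" and "m < N"
  shows "sym_aut N u (2 * m) \<noteq> 0"
  using sym_aut_top[OF assms(1,3)] assms(2) by simp

lemma sym_aut_zero [simp]: "sym_aut N (\<lambda>_. 0) p = 0"
  by (simp add: sym_aut_def lin_aut_def rev_conv_def)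

lemma lin_aut_diff_near_top:
  assumes "\<forall>i>m. u i = 0" and "\<forall>i>m. v i = 0" and "1 \<le> k" and "k \<le> m" and "m < N"
  shows "lin_aut N v (2 * m - k) - lin_aut N u (2 * m - k)
    = (if k = m then cnj (v m * cnj (v (m - k)) - u m * cnj (u (m - k))) else 0)"
proof -
  have "lin_aut N v (2 * m - k) - lin_aut N u (2 * m - k)
      = (\<Sum>i<N. v i * cnj (v (i + (2 * m - k))) - u i * cnj (u (i + (2 * m - k))))"
    unfolding lin_aut_def by (simp add: sum_subtractf)
  also have "\<dots> = (\<Sum>i<N. if i = 0 \<and> k = m
      then cnj (v m * cnj (v (m - k)) - u m * cnj (u (m - k))) else 0)"
  proof (rule sum.cong[OF refl])
    fix i
    show "v i * cnj (v (i + (2 * m - k))) - u i * cnj (u (i + (2 * m - k)))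
      = (if i = 0 \<and> k = m then cnj (v m * cnj (v (m - k)) - u m * cnj (u (m - k))) else 0)"
    proof (cases "i = 0 \<and> k = m")
      case False
      then have "m < i + (2 * m - k)" using assms(3,4) by auto
      then show ?thesis using assms(1,2) False by auto
    qed auto
  qed
  also have "\<dots> = (if k = m then cnj (v m * cnj (v (m - k)) - u m * cnj (u (m - k))) else 0)"
    using assms(5) by simp
  finally show ?thesis .
qed

text \<open>Only the two outermost products of the lag-\<open>2m - k\<close> convolution involve the
  unknown index \<open>m - k\<close>; the inner ones are products of already matched entries, in which
  the unimodular factor \<open>c\<close> cancels.\<close>

lemma rev_conv_diff_near_top:
  assumes "\<forall>i>m. u i = 0" and "\<forall>i>m. v i = 0" and "1 \<le> k" and "k \<le> m"
    and "\<forall>i. m < i + k \<longrightarrow> v i = c * u i" and "c * cnj c = 1"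
  defines "D \<equiv> v m * cnj (v (m - k)) - u m * cnj (u (m - k))"
  shows "rev_conv v (2 * m - k) - rev_conv u (2 * m - k) = D + cnj D"
proof -
  let ?p = "2 * m - k"
  have "rev_conv v ?p - rev_conv u ?p
      = (\<Sum>i\<le>?p. v i * cnj (v (?p - i)) - u i * cnj (u (?p - i)))"
    unfolding rev_conv_def by (simp add: sum_subtractf)
  also have "\<dots> = (\<Sum>i\<le>?p. (if i = m then D else 0) + (if i = m - k then cnj D else 0))"
  proof (rule sum.cong[OF refl])
    fix i assume "i \<in> {..?p}"
    then consider "i = m" | "i = m - k" | "i < m - k" | "m - k < i \<and> i < m" | "m < i"
      by linarith
    then show "v i * cnj (v (?p - i)) - u i * cnj (u (?p - i))
      = (if i = m then D else 0) + (if i = m - k then cnj D else 0)"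
    proof cases
      case 1
      then have "?p - i = m - k" using assms(4) by auto
      then show ?thesis using 1 assms(3,4) unfolding D_def by auto
    next
      case 2
      then have "?p - i = m" using assms(4) by auto
      then show ?thesis using 2 assms(3,4) unfolding D_def by auto
    next
      case 3
      then have "m < ?p - i" by auto
      then show ?thesis using 3 assms(1,2) by auto
    next
      case 4
      then have "v i = c * u i" and "v (?p - i) = c * u (?p - i)" using assms(5) by auto
      then have "v i * cnj (v (?p - i)) = (c * cnj c) * (u i * cnj (u (?p - i)))"
        by (simp add: algebra_simps)
      then show ?thesis using 4 assms(6) by auto
    qed (use assms(1,2) in auto)
  qed
  also have "\<dots> = D + cnj D" using assms(4) by (simp add: sum.distrib, linarith)
  finally show ?thesis .
qed

lemma sym_aut_diff_near_top:
  assumes "\<forall>i>m. u i = 0" and "\<forall>i>m. v i = 0" and "1 \<le> k" and "k \<le> m" and "m < N"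
    and "\<forall>i. m < i + k \<longrightarrow> v i = c * u i" and "c * cnj c = 1"
    and "sym_aut N u (2 * m - k) = sym_aut N v (2 * m - k)"
  shows "Re (v m * cnj (v (m - k)) - u m * cnj (u (m - k))) = 0"
proof -
  define D where "D = v m * cnj (v (m - k)) - u m * cnj (u (m - k))"
  have "sym_aut N v (2 * m - k) - sym_aut N u (2 * m - k)
      = (lin_aut N v (2 * m - k) - lin_aut N u (2 * m - k))
        + cnj (lin_aut N v (2 * m - k) - lin_aut N u (2 * m - k))
        + (rev_conv v (2 * m - k) - rev_conv u (2 * m - k))"
    unfolding sym_aut_def using assms(3,4) by simp
  also have "\<dots> = (if k = m then 2 else 1) * (D + cnj D)"
    unfolding lin_aut_diff_near_top[OF assms(1-5)]
      rev_conv_diff_near_top[OF assms(1-4,6,7)] D_def by auto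
  finally have "(if k = m then 2 else 1) * (D + cnj D) = 0"
    using assms(8) by simp
  then have "D + cnj D = 0" by (auto split: if_splits)
  then have "Re (D + cnj D) = 0" by simp
  then show ?thesis unfolding D_def by simp
qed

lemma complex_eq_0_if_Re_eq_0_rotated:
  assumes "Re z = 0" and "Re (w * z) = 0" and "w \<notin> \<real>"
  shows "z = 0"
proof -
  have "Im w \<noteq> 0" using assms(3) complex_is_Real_iff by auto
  moreover have "Im w * Im z = 0" using assms(1,2) by simp
  ultimately show ?thesis using assms(1) complex_eq_iff by auto
qed

lemma next_coefficient:
  fixes a b \<omega> :: "nat \<Rightarrow> complex"
  assumes a0: "\<forall>i>m. a i = 0" and b0: "\<forall>i>m. b i = 0" and am: "a m \<noteq> 0"
    and bm: "b m = c * a m" and c: "c * cnj c = 1"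
    and k: "1 \<le> k" "k \<le> m" and mN: "m < N"
    and matched: "\<forall>i. m < i + k \<longrightarrow> b i = c * a i"
    and \<omega>: "\<omega> m * cnj (\<omega> (m - k)) \<notin> \<real>"
    and eq: "sym_aut N a (2 * m - k) = sym_aut N b (2 * m - k)"
    and eq\<omega>: "sym_aut N (\<lambda>i. \<omega> i * a i) (2 * m - k) = sym_aut N (\<lambda>i. \<omega> i * b i) (2 * m - k)"
  shows "b (m - k) = c * a (m - k)"
proof -
  define D where "D = b m * cnj (b (m - k)) - a m * cnj (a (m - k))"
  have "Re D = 0"
    using sym_aut_diff_near_top[OF a0 b0 k mN matched c eq] unfolding D_def .
  moreover have "Re ((\<omega> m * cnj (\<omega> (m - k))) * D) = 0"
  proof -
    have "Re ((\<omega> m * b m) * cnj (\<omega> (m - k) * b (m - k))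
             - (\<omega> m * a m) * cnj (\<omega> (m - k) * a (m - k))) = 0"
      using sym_aut_diff_near_top[of m "\<lambda>i. \<omega> i * a i" "\<lambda>i. \<omega> i * b i" k N c]
        a0 b0 k mN matched c eq\<omega> by auto
    then show ?thesis unfolding D_def by (simp add: algebra_simps)
  qed
  ultimately have "D = 0" using complex_eq_0_if_Re_eq_0_rotated \<omega> by blast
  then have "a m * (c * cnj (b (m - k))) = a m * cnj (a (m - k))"
    unfolding D_def bm by (simp add: algebra_simps)
  then have "c * cnj (b (m - k)) = cnj (a (m - k))" using am by simp
  then have "(cnj c * c) * cnj (b (m - k)) = cnj (c * a (m - k))" by (simp add: algebra_simps)
  then have "cnj (b (m - k)) = cnj (c * a (m - k))" using c by (simp add: mult.commute)
  then show ?thesis by (metis complex_cnj_cnj)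
qed

lemma last_nonzero_exists:
  fixes u :: "nat \<Rightarrow> complex"
  assumes "\<exists>i. u i \<noteq> 0" and "\<forall>i\<ge>K. u i = 0"
  obtains m where "m < K" and "u m \<noteq> 0" and "\<forall>i>m. u i = 0"
proof -
  let ?A = "{i. u i \<noteq> 0}"
  have sub: "?A \<subseteq> {..<K}" using assms(2) not_le by auto
  then have fin: "finite ?A" by (rule finite_subset) simp
  have "?A \<noteq> {}" using assms(1) by auto
  then have "Max ?A \<in> ?A" using Max_in[OF fin] by blast
  moreover have "\<forall>i>Max ?A. u i = 0"
  proof (intro allI impI)
    fix i assume "Max ?A < i"
    then show "u i = 0" using Max_ge[OF fin, of i] by auto
  qed
  ultimately show ?thesis using that sub by blast
qed

lemma sym_aut_eq_imp_zero:
  assumes "\<forall>i\<ge>K. v i = 0" and "2 * K - 2 < N"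
    and "\<forall>p \<le> 2 * K - 2. sym_aut N (\<lambda>_. 0) p = sym_aut N v p"
  shows "v = (\<lambda>_. 0)"
proof (rule ccontr)
  assume "v \<noteq> (\<lambda>_. 0)"
  then have "\<exists>i. v i \<noteq> 0" by (simp add: fun_eq_iff)
  then obtain m where m: "m < K" "v m \<noteq> 0" "\<forall>i>m. v i = 0"
    by (rule last_nonzero_exists[OF _ assms(1)])
  then have "2 * m \<le> 2 * K - 2" and "m < N" using assms(2) by linarith+
  then have "sym_aut N v (2 * m) = 0" using assms(3) by simp
  then show False using sym_aut_top_nonzero[OF m(3,2) \<open>m < N\<close>] by contradiction
qed

lemma sym_aut_eq_imp_last_nonzero_eq:
  assumes "\<forall>i>m. u i = 0" and "u m \<noteq> 0" and "\<forall>i>m'. v i = 0" and "v m' \<noteq> 0"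
    and "m < K" and "m' < K" and "2 * K - 2 < N"
    and eq: "\<forall>p \<le> 2 * K - 2. sym_aut N u p = sym_aut N v p"
  shows "m = m'"
proof -
  have below: "\<not> m' < m"
    if "\<forall>i>m. u i = 0" "u m \<noteq> 0" "\<forall>i>m'. v i = 0" "m < K"
      and "sym_aut N u (2 * m) = sym_aut N v (2 * m)"
    for u v m m'
  proof
    assume "m' < m"
    have "m < N" using that(4) assms(7) by linarith
    have "sym_aut N v (2 * m) = 0"
      using sym_aut_vanishes_above[OF that(3)] \<open>m' < m\<close> by simp
    then show False using sym_aut_top_nonzero[OF that(1,2) \<open>m < N\<close>] that(5) by simp
  qed
  have "2 * m \<le> 2 * K - 2" "2 * m' \<le> 2 * K - 2" using assms(5,6) by linarith+
  then have "\<not> m' < m" and "\<not> m < m'"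
    using below[of m u m' v] below[of m' v m u] assms(1-6) eq by simp_all
  then show ?thesis by simp
qed

lemma sym_aut_pair_propagates_phase:
  fixes a b \<omega> :: "nat \<Rightarrow> complex"
  assumes a0: "\<forall>i>m. a i = 0" and b0: "\<forall>i>m. b i = 0" and am: "a m \<noteq> 0"
    and bm: "b m = c * a m" and c: "c * cnj c = 1" and mN: "m < N"
    and \<omega>: "\<forall>k. 1 \<le> k \<and> k \<le> m \<longrightarrow> \<omega> m * cnj (\<omega> (m - k)) \<notin> \<real>"
    and eq: "\<forall>p \<le> 2 * m. sym_aut N a p = sym_aut N b p"
    and eq\<omega>: "\<forall>p \<le> 2 * m. sym_aut N (\<lambda>i. \<omega> i * a i) p = sym_aut N (\<lambda>i. \<omega> i * b i) p"
  shows "b = (\<lambda>i. c * a i)"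
proof -
  have "\<forall>i. m < i + k \<longrightarrow> b i = c * a i" if "k \<le> m + 1" for k
    using that
  proof (induction k)
    case 0
    then show ?case using a0 b0 by auto
  next
    case (Suc k)
    then have IH: "\<forall>i. m < i + k \<longrightarrow> b i = c * a i" and "k \<le> m" by auto
    have "b (m - k) = c * a (m - k)"
    proof (cases "k = 0")
      case False
      then have k: "1 \<le> k" "k \<le> m" using \<open>k \<le> m\<close> by auto
      then show ?thesis
        using next_coefficient[where \<omega> = \<omega>, OF a0 b0 am bm c k mN IH] \<omega> eq eq\<omega> by simp
    qed (use bm in simp)
    moreover have "m < i + k \<or> i = m - k" if "m < i + Suc k" for i
      using that \<open>k \<le> m\<close> by linarith
    ultimately show ?case using IH by blast
  qed
  from this[of "m + 1"] show ?thesis by (simp add: fun_eq_iff)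
qed

lemma sym_aut_pair_determines_up_to_phase:
  fixes a b \<omega> :: "nat \<Rightarrow> complex"
  assumes a0: "\<forall>i\<ge>K. a i = 0" and b0: "\<forall>i\<ge>K. b i = 0" and KN: "2 * K - 2 < N"
    and \<omega>: "\<forall>j<K. \<forall>k<K. j \<noteq> k \<longrightarrow> \<omega> j * cnj (\<omega> k) \<notin> \<real>"
    and eq: "\<forall>p \<le> 2 * K - 2. sym_aut N a p = sym_aut N b p"
    and eq\<omega>: "\<forall>p \<le> 2 * K - 2. sym_aut N (\<lambda>i. \<omega> i * a i) p = sym_aut N (\<lambda>i. \<omega> i * b i) p"
  shows "\<exists>c. norm c = 1 \<and> b = (\<lambda>i. c * a i)"
proof (cases "a = (\<lambda>_. 0)")
  case True
  then have "b = (\<lambda>_. 0)" using sym_aut_eq_imp_zero[OF b0 KN] eq by simp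
  then show ?thesis using True by (intro exI[of _ 1]) simp
next
  case False
  then have "\<exists>i. a i \<noteq> 0" by (simp add: fun_eq_iff)
  then obtain m where m: "m < K" "a m \<noteq> 0" "\<forall>i>m. a i = 0"
    by (rule last_nonzero_exists[OF _ a0])
  have "b \<noteq> (\<lambda>_. 0)"
    using sym_aut_eq_imp_zero[OF a0 KN] eq False by (metis sym_aut_zero)
  then have "\<exists>i. b i \<noteq> 0" by (simp add: fun_eq_iff)
  then obtain m' where m': "m' < K" "b m' \<noteq> 0" "\<forall>i>m'. b i = 0"
    by (rule last_nonzero_exists[OF _ b0])
  have "m' = m"
    using sym_aut_eq_imp_last_nonzero_eq[OF m(3,2) m'(3,2) m(1) m'(1) KN eq] by simp
  with m' have bm: "b m \<noteq> 0" "\<forall>i>m. b i = 0" by auto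
  have mN: "m < N" and mK: "2 * m \<le> 2 * K - 2" using m(1) KN by linarith+
  have "sym_aut N a (2 * m) = sym_aut N b (2 * m)" using eq mK by simp
  then have "a m * cnj (a m) = b m * cnj (b m)"
    using sym_aut_top[OF m(3) mN] sym_aut_top[OF bm(2) mN] by (simp split: if_splits)
  then have "norm (a m) = norm (b m)"
    by (metis complex_norm_square norm_ge_zero of_real_eq_iff power2_eq_imp_eq)
  define c where "c = b m / a m"
  have c: "norm c = 1" using \<open>norm (a m) = norm (b m)\<close> m(2) bm(1) by (simp add: c_def norm_divide)
  then have "c * cnj c = 1" using complex_norm_square[of c] by simp
  moreover have "b m = c * a m" using m(2) by (simp add: c_def)
  moreover have "\<forall>k. 1 \<le> k \<and> k \<le> m \<longrightarrow> \<omega> m * cnj (\<omega> (m - k)) \<notin> \<real>" using \<omega> m(1) by auto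
  ultimately have "b = (\<lambda>i. c * a i)"
    using sym_aut_pair_propagates_phase[OF m(3) bm(2) m(2) _ _ mN] eq eq\<omega> mK by simp
  then show ?thesis using c by blast
qed

lemma periodic_add_multiple:
  assumes "periodic P z"
  shows "z (r + k * int P) = z r"
proof (induction k rule: int_induct[where k = 0])
  case (step1 i)
  then show ?case using assms unfolding periodic_def by (metis add.assoc distrib_right mult_1)
next
  case (step2 i)
  then show ?case using assms unfolding periodic_def by (metis diff_add_cancel left_diff_distrib
        mult_1 add_diff_eq)
qed simp

lemma periodic_mod:
  assumes "periodic P z"
  shows "z (r mod int P) = z r"
  using periodic_add_multiple[OF assms, of "r mod int P" "r div int P"] by simp

lemma periodic_shift: "periodic P z \<Longrightarrow> periodic P (\<lambda>q. z (q + c))"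
  unfolding periodic_def by (metis add.commute add.left_commute)

lemma periodic_reflect: "periodic P z \<Longrightarrow> periodic P (\<lambda>q. z (c - q))"
  using periodic_add_multiple[of P z "c - _" "-1"] unfolding periodic_def by (simp add: algebra_simps)

lemma periodic_mult_cnj:
  "periodic P f \<Longrightarrow> periodic P g \<Longrightarrow> periodic P (\<lambda>q. f q * cnj (g q))"
  unfolding periodic_def by simp

lemma sum_period_shift:
  assumes "periodic P g" and "P > 0"
  shows "(\<Sum>q\<in>{0..<int P}. g (q + c)) = (\<Sum>q\<in>{0..<int P}. g q)"
proof -
  have "(\<Sum>q\<in>{0..<int P}. g (q + c)) = (\<Sum>q\<in>{0..<int P}. g ((q + c) mod int P))"
    using periodic_mod[OF assms(1)] by simp
  also have "\<dots> = (\<Sum>q\<in>{0..<int P}. g q)"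
  proof (rule sum.reindex_bij_witness[of _ "\<lambda>q. (q - c) mod int P" "\<lambda>q. (q + c) mod int P"])
    fix a assume "a \<in> {0..<int P}"
    then show "((a + c) mod int P - c) mod int P = a" and "((a - c) mod int P + c) mod int P = a"
      by (simp_all add: mod_diff_left_eq mod_add_left_eq)
  qed (use assms(2) in simp_all)
  finally show ?thesis .
qed

lemma sum_period_reflect:
  assumes "periodic P g" and "P > 0"
  shows "(\<Sum>q\<in>{0..<int P}. g (- q)) = (\<Sum>q\<in>{0..<int P}. g q)"
proof -
  have "(\<Sum>q\<in>{0..<int P}. g (- q)) = (\<Sum>q\<in>{0..<int P}. g ((- q) mod int P))"
    using periodic_mod[OF assms(1)] by simp
  also have "\<dots> = (\<Sum>q\<in>{0..<int P}. g q)"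
    by (rule sum.reindex_bij_witness[of _ "\<lambda>q. (- q) mod int P" "\<lambda>q. (- q) mod int P"])
      (use assms(2) in \<open>auto simp: mod_minus_eq\<close>)
  finally show ?thesis .
qed

lemma sum_int_atLeastLessThan_eq_sum_lessThan:
  "(\<Sum>q\<in>{0..<int P}. f q) = (\<Sum>i<P. f (int i))"
proof -
  have "{0..<int P} = int ` {..<P}" using image_atLeastZeroLessThan_int[of "int P"] by simp
  then show ?thesis by (simp add: sum.reindex)
qed

definition head :: "nat \<Rightarrow> (int \<Rightarrow> complex) \<Rightarrow> nat \<Rightarrow> complex" where
  "head M z i = (if i < M then z (int i) else 0)"

locale zero_padded =
  fixes M P :: nat and z :: "int \<Rightarrow> complex"
  assumes M_pos: "M \<ge> 1" and P_eq: "P = 4 * M - 3" and z_periodic: "periodic P z"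
    and padding: "\<forall>p\<in>{int M..int (4 * M - 4)}. z p = 0"
begin

lemma P_pos: "P > 0"
  using M_pos P_eq by simp

lemma z_add_P: "z (r + int P) = z r"
  using z_periodic unfolding periodic_def by simp

lemma z_int: "n < P \<Longrightarrow> z (int n) = head M z n"
  using padding P_eq unfolding head_def by auto

lemma z_eq_head_mod: "z r = head M z (nat (r mod int P))"
  using z_int[of "nat (r mod int P)"] periodic_mod[OF z_periodic, of r] P_pos
  by (simp add: nat_less_iff)

lemma head_eq_0: "M \<le> n \<Longrightarrow> head M z n = 0"
  unfolding head_def by simp

text \<open>Since \<open>P = 4M - 3\<close>, lags \<open>p \<le> 2M - 2\<close> never make the support \<open>[0, M)\<close>
  of \<open>z\<close> meet its cyclic translates or reflections across the end of the period.\<close>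

lemma sum_translate_eq_lin_aut:
  assumes "p \<le> 2 * M - 2"
  shows "(\<Sum>q\<in>{0..<int P}. z q * cnj (z (int p + q))) = lin_aut P (head M z) p"
  unfolding sum_int_atLeastLessThan_eq_sum_lessThan lin_aut_def
proof (rule sum.cong[OF refl])
  fix i assume "i \<in> {..<P}"
  show "z (int i) * cnj (z (int p + int i)) = head M z i * cnj (head M z (i + p))"
  proof (cases "i < M")
    case True
    then have "i + p < P" using P_eq assms M_pos by linarith
    then show ?thesis using z_int[of i] z_int[of "i + p"] \<open>i \<in> {..<P}\<close> by (simp add: add.commute)
  qed (use z_int head_eq_0 \<open>i \<in> {..<P}\<close> in simp)
qed

lemma sum_reflect_eq_rev_conv:
  assumes "p \<le> 2 * M - 2"
  shows "(\<Sum>q\<in>{0..<int P}. z q * cnj (z (int p - q))) = rev_conv (head M z) p"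
proof -
  have "p < P" using assms P_eq M_pos by linarith
  have vanish: "z (int i) * cnj (z (int p - int i)) = 0" if "p < i" "i < P" for i
  proof (cases "i < M")
    case True
    have "int p - int i + int P = int (p + P - i)" using that by simp
    then have "z (int p - int i) = z (int (p + P - i))" using z_add_P[of "int p - int i"] by simp
    also have "\<dots> = 0" using z_int[of "p + P - i"] head_eq_0 True that P_eq by simp
    finally show ?thesis by simp
  qed (use z_int head_eq_0 that in simp)
  have "(\<Sum>q\<in>{0..<int P}. z q * cnj (z (int p - q)))
      = (\<Sum>i\<le>p. z (int i) * cnj (z (int p - int i)))"
    unfolding sum_int_atLeastLessThan_eq_sum_lessThan
    by (rule sum.mono_neutral_right) (use \<open>p < P\<close> vanish in auto)
  also have "\<dots> = rev_conv (head M z) p"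
    unfolding rev_conv_def
  proof (rule sum.cong[OF refl])
    fix i assume "i \<in> {..p}"
    then have "z (int p - int i) = head M z (p - i)"
      using z_int[of "p - i"] \<open>p < P\<close> by (simp add: of_nat_diff)
    then show "z (int i) * cnj (z (int p - int i)) = head M z i * cnj (head M z (p - i))"
      using z_int[of i] \<open>p < P\<close> \<open>i \<in> {..p}\<close> by simp
  qed
  finally show ?thesis .
qed

lemma sum_reflect_negated_lag:
  assumes "p \<le> 2 * M - 2"
  shows "(\<Sum>q\<in>{0..<int P}. z q * cnj (z (- int p - q)))
    = (if p = 0 then head M z 0 * cnj (head M z 0) else 0)"
proof -
  have "(\<Sum>q\<in>{0..<int P}. z q * cnj (z (- int p - q)))
      = (\<Sum>i<P. if i = 0 then (if p = 0 then head M z 0 * cnj (head M z 0) else 0) else 0)"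
    unfolding sum_int_atLeastLessThan_eq_sum_lessThan
  proof (rule sum.cong[OF refl])
    fix i assume "i \<in> {..<P}"
    show "z (int i) * cnj (z (- int p - int i))
      = (if i = 0 then (if p = 0 then head M z 0 * cnj (head M z 0) else 0) else 0)"
    proof (cases "i < M \<and> \<not> (i = 0 \<and> p = 0)")
      case True
      have "i + p < P" using True assms P_eq M_pos by linarith
      then have "- int p - int i + int P = int (P - i - p)" by simp
      then have "z (- int p - int i) = z (int (P - i - p))"
        using z_add_P[of "- int p - int i"] by simp
      moreover have "M \<le> P - i - p" and "P - i - p < P" using True assms P_eq by linarith+
      ultimately have "z (- int p - int i) = 0" using z_int[of "P - i - p"] head_eq_0 by simp
      then show ?thesis using True by auto
    next
      case False
      then consider "M \<le> i" | "i = 0" "p = 0" by linarith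
      then show ?thesis
      proof cases
        case 1
        then show ?thesis using z_int[of i] head_eq_0[of i] M_pos \<open>i \<in> {..<P}\<close> by auto
      next
        case 2
        then show ?thesis using z_int[of 0] P_pos by simp
      qed
    qed
  qed
  also have "\<dots> = (if p = 0 then head M z 0 * cnj (head M z 0) else 0)" using P_pos by simp
  finally show ?thesis .
qed

lemma diagop_zero_padded: "zero_padded M P (diagop P \<omega> z)"
  using M_pos P_eq z_periodic padding
  by unfold_locales (simp_all add: periodic_def diagop_def)

lemma head_diagop: "head M (diagop P \<omega> z) = (\<lambda>i. \<omega> i * head M z i)"
  using P_eq by (auto simp: fun_eq_iff head_def diagop_def)

lemma CirAut_sym_eq_sym_aut:
  assumes "p \<le> 2 * M - 2"
  shows "CirAut P (\<lambda>q. z q + revop z q) (int p) = sym_aut P (head M z) p"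
proof -
  have per_translate: "periodic P (\<lambda>q. z (q + c) * cnj (z (q + d)))" for c d
    by (intro periodic_mult_cnj periodic_shift z_periodic)
  have per_reflect: "periodic P (\<lambda>q. z (q + c) * cnj (z (d - q)))" for c d
    by (intro periodic_mult_cnj periodic_shift periodic_reflect z_periodic)
  have "CirAut P (\<lambda>q. z q + revop z q) (int p)
      = (\<Sum>q\<in>{0..<int P}. z q * cnj (z (q - int p)))
      + (\<Sum>q\<in>{0..<int P}. z q * cnj (z (int p - q)))
      + (\<Sum>q\<in>{0..<int P}. z (- q) * cnj (z (q - int p)))
      + (\<Sum>q\<in>{0..<int P}. z (- q) * cnj (z (int p - q)))"
    unfolding CirAut_def inner_ZP_def transl_def revop_def
    by (simp add: sum.distrib algebra_simps)
  also have "(\<Sum>q\<in>{0..<int P}. z q * cnj (z (q - int p)))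
      = cnj (\<Sum>q\<in>{0..<int P}. z q * cnj (z (int p + q)))"
    using sum_period_shift[OF per_translate[of 0 "- int p"] P_pos, of "int p"] unfolding cnj_sum
    by (simp add: ac_simps)
  also have "(\<Sum>q\<in>{0..<int P}. z (- q) * cnj (z (q - int p)))
      = (\<Sum>q\<in>{0..<int P}. z q * cnj (z (- int p - q)))"
    using sum_period_reflect[OF per_reflect[of 0 "- int p"] P_pos] by simp
  also have "(\<Sum>q\<in>{0..<int P}. z (- q) * cnj (z (int p - q)))
      = (\<Sum>q\<in>{0..<int P}. z q * cnj (z (int p + q)))"
    using sum_period_reflect[OF per_translate[of 0 "int p"] P_pos] by (simp add: ac_simps)
  finally show ?thesis
    unfolding sum_translate_eq_lin_aut[OF assms] sum_reflect_eq_rev_conv[OF assms]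
      sum_reflect_negated_lag[OF assms] sym_aut_def by simp
qed

end

theorem theorem5:
  fixes M P :: nat and \<omega> :: "nat \<Rightarrow> complex" and x y :: "int \<Rightarrow> complex"
  assumes "M \<ge> 1" and "P = 4 * M - 3"
    and "\<forall>k<P. norm (\<omega> k) = 1"
    and "\<forall>j<P. \<forall>k<P. j \<noteq> k \<longrightarrow> \<omega> j * cnj (\<omega> k) \<notin> \<real>"
    and "periodic P x" and "periodic P y"
    and "\<forall>p\<in>{int M..int (4 * M - 4)}. x p = 0"
    and "\<forall>p\<in>{int M..int (4 * M - 4)}. y p = 0"
    and "CirAut P (\<lambda>p. x p + revop x p) = CirAut P (\<lambda>p. y p + revop y p)"
    and "CirAut P (\<lambda>p. diagop P \<omega> x p + revop (diagop P \<omega> x) p)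
       = CirAut P (\<lambda>p. diagop P \<omega> y p + revop (diagop P \<omega> y) p)"
  shows "\<exists>c::complex. norm c = 1 \<and> y = (\<lambda>p. c * x p)"
proof -
  interpret x: zero_padded M P x using assms(1,2,5,7) by unfold_locales
  interpret y: zero_padded M P y using assms(1,2,6,8) by unfold_locales
  interpret \<omega>x: zero_padded M P "diagop P \<omega> x" by (rule x.diagop_zero_padded)
  interpret \<omega>y: zero_padded M P "diagop P \<omega> y" by (rule y.diagop_zero_padded)
  have "\<forall>p \<le> 2 * M - 2. sym_aut P (head M x) p = sym_aut P (head M y) p"
    using x.CirAut_sym_eq_sym_aut y.CirAut_sym_eq_sym_aut assms(9) by simp
  moreover have "\<forall>p \<le> 2 * M - 2.
      sym_aut P (\<lambda>i. \<omega> i * head M x i) p = sym_aut P (\<lambda>i. \<omega> i * head M y i) p"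
    using \<omega>x.CirAut_sym_eq_sym_aut \<omega>y.CirAut_sym_eq_sym_aut assms(10)
    unfolding x.head_diagop y.head_diagop by simp
  moreover have "2 * M - 2 < P" and "\<forall>j<M. \<forall>k<M. j \<noteq> k \<longrightarrow> \<omega> j * cnj (\<omega> k) \<notin> \<real>"
    using assms(1,2,4) by auto
  ultimately obtain c where "norm c = 1" and c: "head M y = (\<lambda>i. c * head M x i)"
    using sym_aut_pair_determines_up_to_phase[of M "head M x" "head M y" P \<omega>]
    by (auto simp: head_def)
  moreover have "y = (\<lambda>p. c * x p)"
  proof
    fix r
    show "y r = c * x r"
      using y.z_eq_head_mod[of r] x.z_eq_head_mod[of r] c by simp
  qed
  ultimately show ?thesis by blast
qed

end
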